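(* Assume $a,b\in C^1(\mathbb{R})$ with $a>0$ everywhere, and that there is $\bar u<1$ with $$-\infty<\inf_{\mathbb{R}} b<\inf_{u\ge \bar u} b(u).$$ For each $T>0$ let $u_T$ be a minimizer of $F_T$ over $U_T$ (minimization without any contact constraint). Then there is a constant $c>0$, independent of $T$, such that for all $T>0$ $$\bigl|\{x\in[0,T]: u_T(x)\ge \bar u\}\bigr|\le c\,(1+\sqrt T),$$ where $|\cdot|$ denotes Lebesgue measure.
   Context: For $T>0$, $U_T=\{1+v: v\in H^1_0(0,T)\}$ (functions in $H^1(0,T)$ equal to $1$ at $0$ and $T$), and $F_T(u)=\int_0^T\bigl[a(u)(u')^2+b(u)\bigr]\,dx$ for $u\in U_T$. *)

theory Defs
  imports "HOL-Analysis.Analysis"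
begin

text \<open>H^1(0,T) via the absolutely continuous representative: u is in H^1(0,T)
  with weak derivative g iff g is square integrable on [0,T] and
  u x = u 0 + integral of g over [0,x] for all x in [0,T].\<close>
definition H1_with_deriv :: "real \<Rightarrow> (real \<Rightarrow> real) \<Rightarrow> (real \<Rightarrow> real) \<Rightarrow> bool" where
  "H1_with_deriv T u g \<longleftrightarrow>
     g \<in> borel_measurable lborel \<and>
     set_integrable lborel {0..T} g \<and>
     set_integrable lborel {0..T} (\<lambda>x. (g x)\<^sup>2) \<and>
     (\<forall>x\<in>{0..T}. u x = u 0 + (LBINT t=0..x. g t))"

definition in_U :: "real \<Rightarrow> (real \<Rightarrow> real) \<Rightarrow> (real \<Rightarrow> real) \<Rightarrow> bool" where
  "in_U T u g \<longleftrightarrow> H1_with_deriv T u g \<and> u 0 = 1 \<and> u T = 1"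

definition F_energy :: "(real \<Rightarrow> real) \<Rightarrow> (real \<Rightarrow> real) \<Rightarrow> real \<Rightarrow> (real \<Rightarrow> real) \<Rightarrow> (real \<Rightarrow> real) \<Rightarrow> real" where
  "F_energy a b T u g = (LBINT x:{0..T}. a (u x) * (g x)\<^sup>2 + b (u x))"

definition is_minimizer :: "(real \<Rightarrow> real) \<Rightarrow> (real \<Rightarrow> real) \<Rightarrow> real \<Rightarrow> (real \<Rightarrow> real) \<Rightarrow> bool" where
  "is_minimizer a b T u \<longleftrightarrow>
     (\<exists>g. in_U T u g \<and> (\<forall>v h. in_U T v h \<longrightarrow> F_energy a b T u g \<le> F_energy a b T v h))"

end

theory Submission
  imports Defs
begin

text \<open>
  Comparing a minimizer \<open>U\<close> with the path that ramps from 1 to a near-minimum point \<open>s\<close>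
  of \<open>b\<close>, stays there and ramps back gives \<open>F\<^sub>T(U) \<le> T b(s) + O(1)\<close>. Hence the minimum
  \<open>b(U x\<^sub>0)\<close> of \<open>b\<close> along \<open>U\<close> exceeds \<open>b(s)\<close> by \<open>O(1/T)\<close>; as \<open>b(s)\<close> is close to
  \<open>inf b\<close>, this forces \<open>U x\<^sub>0 < ubar\<close> once \<open>T\<close> is large. Let \<open>(p, q)\<close> be the largest
  interval around \<open>x\<^sub>0\<close> on which \<open>U < ubar\<close>. Replacing \<open>U\<close> on \<open>[0, p]\<close> and \<open>[q, T]\<close>
  by unit ramps, and restoring the length \<open>T\<close> by a constant piece at level \<open>U x\<^sub>0\<close>
  inserted at \<open>x\<^sub>0\<close>, gives a competitor. By minimality the energy of \<open>U\<close> on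
  \<open>[0, p] \<union> [q, T]\<close> exceeds \<open>b(U x\<^sub>0) (p + T - q)\<close> by at most a constant, while
  \<open>b \<ge> b(U x\<^sub>0) + \<delta>/2\<close> on \<open>{U \<ge> ubar}\<close>. So the superlevel set has measure
  bounded independently of \<open>T\<close>.
\<close>

section \<open>Integrals and level sets of real functions\<close>

lemma absolutely_integrable_shift:
  fixes f :: "real \<Rightarrow> real"
  assumes "f absolutely_integrable_on {p..q}"
  shows "(\<lambda>x. f (x - d)) absolutely_integrable_on {p+d..q+d}"
proof -
  have "f integrable_on {p..q}" "(\<lambda>x. norm (f x)) integrable_on {p..q}"
    using set_lebesgue_integral_eq_integral(1)[OF assms]
      set_lebesgue_integral_eq_integral(1)[OF absolutely_integrable_norm[OF assms]]
    by (simp_all add: o_def)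
  from this[THEN integrable_shift_real_ivl[of _ p q "-d"]] show ?thesis
    unfolding absolutely_integrable_on_def by simp
qed

lemma absolutely_integrable_if_le:
  fixes f g :: "real \<Rightarrow> real"
  assumes "f absolutely_integrable_on {p..q}" "g absolutely_integrable_on {q..r}" "p \<le> q" "q \<le> r"
  shows "(\<lambda>x. if x \<le> q then f x else g x) absolutely_integrable_on {p..r}"
proof -
  have "(\<lambda>x. if x \<le> q then f x else g x) absolutely_integrable_on {p..q} \<union> {q..r}"
    by (intro absolutely_integrable_Un absolutely_integrable_spike[OF assms(1), of "{}"]
          absolutely_integrable_spike[OF assms(2), of "{q}"]) auto
  moreover have "{p..q} \<union> {q..r} = {p..r}" using assms(3,4) by auto
  ultimately show ?thesis by simp
qed

lemma set_integrable_lborel_iff_absolutely_integrable: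
  fixes f :: "real \<Rightarrow> real"
  assumes "(\<lambda>x. indicator S x *\<^sub>R f x) \<in> borel_measurable lborel"
  shows "set_integrable lborel S f \<longleftrightarrow> f absolutely_integrable_on S"
  using integrable_completion[OF assms] unfolding set_integrable_def by simp

lemma integral_ge_const_plus_indicator:
  fixes f :: "real \<Rightarrow> real"
  assumes "f integrable_on {p..q}" "S \<inter> {p..q} \<in> lmeasurable" "p \<le> q"
    and "\<And>x. x \<in> {p..q} \<Longrightarrow> \<beta> + k * indicator S x \<le> f x"
  shows "\<beta> * (q - p) + k * measure lebesgue (S \<inter> {p..q}) \<le> integral {p..q} f"
proof -
  have ind: "indicat_real S integrable_on {p..q}"
    using assms(2) by (simp add: integrable_on_indicator)
  then have ind_k: "(\<lambda>x. k * indicator S x) integrable_on {p..q}"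
    by (rule integrable_on_mult_right)
  have "integral {p..q} (\<lambda>x. \<beta> + k * indicator S x) \<le> integral {p..q} f"
    by (rule integral_le) (use assms ind_k in \<open>auto intro!: integrable_add\<close>)
  moreover have "integral {p..q} (\<lambda>x. \<beta> + k * indicator S x) = \<beta> * (q - p) + k * measure lebesgue (S \<inter> {p..q})"
    using assms(2,3) ind_k
    by (simp add: integral_add[OF integrable_const_ivl ind_k] integral_indicator)
  ultimately show ?thesis by simp
qed

lemma compact_superlevel_set:
  fixes f :: "real \<Rightarrow> real"
  assumes "continuous_on {s..t} f"
  shows "compact {x\<in>{s..t}. c \<le> f x}"
proof -
  have "closed {x\<in>{s..t}. c \<le> f x}"
    by (rule continuous_on_closed_Collect_le[OF continuous_on_const assms]) simp
  then show ?thesis by (auto simp: compact_eq_bounded_closed intro: bounded_subset[of "{s..t}"])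
qed

lemma measure_superlevel_set_le_outside:
  fixes f :: "real \<Rightarrow> real"
  assumes cont: "continuous_on {s..t} f" and below: "\<And>x. p < x \<Longrightarrow> x < q \<Longrightarrow> f x < c"
  defines "S \<equiv> {x\<in>{s..t}. c \<le> f x}"
  shows "measure lebesgue S \<le> measure lebesgue (S \<inter> {s..p}) + measure lebesgue (S \<inter> {q..t})"
proof -
  have "compact S" unfolding S_def by (rule compact_superlevel_set[OF cont])
  have "S \<subseteq> (S \<inter> {s..p}) \<union> (S \<inter> {q..t})"
  proof
    fix x assume x: "x \<in> S"
    then have "\<not> (p < x \<and> x < q)" using below[of x] by (auto simp: S_def)
    with x show "x \<in> (S \<inter> {s..p}) \<union> (S \<inter> {q..t})" by (auto simp: S_def)
  qed
  then have "measure lebesgue S \<le> measure lebesgue ((S \<inter> {s..p}) \<union> (S \<inter> {q..t}))"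
    using \<open>compact S\<close> by (intro measure_mono_fmeasurable)
      (auto intro: lmeasurable_compact fmeasurableD[OF lmeasurable_compact] compact_Un compact_Int_closed)
  also have "\<dots> \<le> measure lebesgue (S \<inter> {s..p}) + measure lebesgue (S \<inter> {q..t})"
    using \<open>compact S\<close> by (intro measure_Un_le) (auto intro: fmeasurableD[OF lmeasurable_compact] compact_Int_closed)
  finally show ?thesis .
qed

lemma measure_Int_atLeastAtMost_le:
  fixes S :: "real set"
  assumes "S \<in> sets lebesgue" "l \<le> r"
  shows "measure lebesgue (S \<inter> {l..r}) \<le> r - l"
  using measure_mono_fmeasurable[of "S \<inter> {l..r}" "{l..r}" lebesgue] assms by auto

lemma last_level_point:
  fixes f :: "real \<Rightarrow> real"
  assumes cont: "continuous_on {s..t} f" and "s \<le> t" "c \<le> f s" "f t < c"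
  obtains p where "s \<le> p" "p < t" "f p = c" "\<And>x. p < x \<Longrightarrow> x \<le> t \<Longrightarrow> f x < c"
proof -
  define A where "A = {x\<in>{s..t}. c \<le> f x}"
  have "compact A" unfolding A_def by (rule compact_superlevel_set[OF cont])
  moreover have "s \<in> A" using assms by (simp add: A_def)
  ultimately obtain p where p: "p \<in> A" and p_max: "\<And>y. y \<in> A \<Longrightarrow> y \<le> p"
    using compact_attains_sup[of A] by blast
  have above: "f x < c" if "p < x" "x \<le> t" for x
    using p_max[of x] p that by (force simp: A_def)
  have "f p = c"
  proof -
    have "continuous_on {p..t} f" by (rule continuous_on_subset[OF cont]) (use p in \<open>auto simp: A_def\<close>)
    then obtain y where "p \<le> y" "y \<le> t" "f y = c"
      using IVT2'[of f t c p] p assms(4) by (auto simp: A_def)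
    with p_max[of y] p show ?thesis by (force simp: A_def)
  qed
  with p assms(4) above show thesis
    by (intro that[of p]) (auto simp: A_def le_less)
qed

lemma first_level_point:
  fixes f :: "real \<Rightarrow> real"
  assumes cont: "continuous_on {s..t} f" and "s \<le> t" "c \<le> f t" "f s < c"
  obtains q where "s < q" "q \<le> t" "f q = c" "\<And>x. s \<le> x \<Longrightarrow> x < q \<Longrightarrow> f x < c"
proof -
  have "continuous_on {-t..-s} (f \<circ> uminus)"
    by (rule continuous_on_compose) (auto intro: continuous_intros cont)
  then obtain p where p: "-t \<le> p" "p < -s" "f (-p) = c"
    and below: "\<And>x. p < x \<Longrightarrow> x \<le> -s \<Longrightarrow> f (-x) < c"
    using last_level_point[of "-t" "-s" "f \<circ> uminus" c] assms by auto
  show thesis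
  proof (rule that[of "-p"])
    show "f x < c" if "s \<le> x" "x < -p" for x
      using below[of "-x"] that by simp
  qed (use p in auto)
qed

section \<open>Sobolev functions on intervals\<close>

text \<open>\<^const>\<open>H1_with_deriv\<close> on an arbitrary interval \<open>[p, q]\<close>, stated with the
  Henstock-Kurzweil integral, in which translating and concatenating functions is convenient.\<close>

definition H1_on :: "real \<Rightarrow> real \<Rightarrow> (real \<Rightarrow> real) \<Rightarrow> (real \<Rightarrow> real) \<Rightarrow> bool" where
  "H1_on p q u g \<longleftrightarrow> p \<le> q \<and> g \<in> borel_measurable lborel \<and>
     g absolutely_integrable_on {p..q} \<and> (\<lambda>x. (g x)\<^sup>2) absolutely_integrable_on {p..q} \<and>
     (\<forall>x\<in>{p..q}. u x = u p + integral {p..x} g)"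

lemma H1_onI:
  assumes "p \<le> q" "g \<in> borel_measurable lborel" "g absolutely_integrable_on {p..q}"
    "(\<lambda>x. (g x)\<^sup>2) absolutely_integrable_on {p..q}"
    "\<And>x. x \<in> {p..q} \<Longrightarrow> u x = u p + integral {p..x} g"
  shows "H1_on p q u g"
  using assms unfolding H1_on_def by blast

lemma H1_onD:
  assumes "H1_on p q u g"
  shows "p \<le> q" "g \<in> borel_measurable lborel" "g absolutely_integrable_on {p..q}"
    "(\<lambda>x. (g x)\<^sup>2) absolutely_integrable_on {p..q}"
    "\<And>x. x \<in> {p..q} \<Longrightarrow> u x = u p + integral {p..x} g"
  using assms unfolding H1_on_def by blast+

lemma H1_on_continuous:
  assumes "H1_on p q u g"
  shows "continuous_on {p..q} u"
proof -
  have "g integrable_on {p..q}"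
    using H1_onD(3)[OF assms] by (rule set_lebesgue_integral_eq_integral(1))
  then have "continuous_on {p..q} (\<lambda>x. u p + integral {p..x} g)"
    by (intro continuous_intros indefinite_integral_continuous_1)
  then show ?thesis
    by (rule continuous_on_eq) (use H1_onD(5)[OF assms] in metis)
qed

lemma H1_on_subinterval:
  assumes H: "H1_on p q u g" and "p \<le> p'" "p' \<le> q'" "q' \<le> q"
  shows "H1_on p' q' u g"
proof (rule H1_onI)
  show "g absolutely_integrable_on {p'..q'}"
    by (rule absolutely_integrable_on_subinterval[OF H1_onD(3)[OF H]]) (use assms in auto)
  show "(\<lambda>x. (g x)\<^sup>2) absolutely_integrable_on {p'..q'}"
    by (rule absolutely_integrable_on_subinterval[OF H1_onD(4)[OF H]]) (use assms in auto)
  fix x assume x: "x \<in> {p'..q'}"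
  have "g integrable_on {p..x}"
    by (rule set_lebesgue_integral_eq_integral(1),
        rule absolutely_integrable_on_subinterval[OF H1_onD(3)[OF H]]) (use assms x in auto)
  then have "integral {p..p'} g + integral {p'..x} g = integral {p..x} g"
    by (rule Henstock_Kurzweil_Integration.integral_combine[rotated 2]) (use assms x in auto)
  moreover have "u x = u p + integral {p..x} g" "u p' = u p + integral {p..p'} g"
    using assms x by (auto intro: H1_onD(5)[OF H])
  ultimately show "u x = u p' + integral {p'..x} g" by linarith
qed (use assms H1_onD(2)[OF H] in simp_all)

lemma H1_on_shift:
  assumes H: "H1_on p q u g"
  shows "H1_on (p+d) (q+d) (\<lambda>x. u (x - d)) (\<lambda>x. g (x - d))"
proof (rule H1_onI)
  show "(\<lambda>x. g (x - d)) \<in> borel_measurable lborel"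
    using H1_onD(2)[OF H] by measurable
  show "(\<lambda>x. g (x - d)) absolutely_integrable_on {p + d..q + d}"
    "(\<lambda>x. (g (x - d))\<^sup>2) absolutely_integrable_on {p + d..q + d}"
    using absolutely_integrable_shift[OF H1_onD(3)[OF H]]
      absolutely_integrable_shift[OF H1_onD(4)[OF H]] by simp_all
  fix x assume "x \<in> {p + d..q + d}"
  then have "u (x - d) = u p + integral {p..x-d} g" by (intro H1_onD(5)[OF H]) auto
  then show "u (x - d) = u (p + d - d) + integral {p + d..x} (\<lambda>t. g (t - d))"
    using integral_shift_real_ivl[of p "-d" "x-d" g] by simp
qed (use H1_onD(1)[OF H] in simp)

lemma H1_on_concat:
  assumes H1: "H1_on p q u g" and H2: "H1_on q r v h" and "u q = v q"
  shows "H1_on p r (\<lambda>x. if x \<le> q then u x else v x) (\<lambda>x. if x \<le> q then g x else h x)"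
proof -
  have pq: "p \<le> q" and qr: "q \<le> r" using H1_onD(1)[OF H1] H1_onD(1)[OF H2] by auto
  let ?k = "\<lambda>x. if x \<le> q then g x else h x"
  have k_int: "?k absolutely_integrable_on {p..r}"
    by (rule absolutely_integrable_if_le[OF H1_onD(3)[OF H1] H1_onD(3)[OF H2] pq qr])
  have integral_k: "integral {p..x} ?k = integral {p..q} g + integral {q..x} h"
    if "q \<le> x" "x \<le> r" for x
  proof -
    have "?k integrable_on {p..x}"
      by (rule set_lebesgue_integral_eq_integral(1),
          rule absolutely_integrable_on_subinterval[OF k_int]) (use that in auto)
    then have "integral {p..q} ?k + integral {q..x} ?k = integral {p..x} ?k"
      by (rule Henstock_Kurzweil_Integration.integral_combine[rotated 2]) (use pq that in auto)
    then have "integral {p..x} ?k = integral {p..q} ?k + integral {q..x} ?k" ..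
    also have "integral {p..q} ?k = integral {p..q} g"
      by (rule integral_cong) auto
    also have "integral {q..x} ?k = integral {q..x} h"
      by (rule integral_spike[of "{q}"]) auto
    finally show ?thesis .
  qed
  show ?thesis
  proof (rule H1_onI)
    show "?k \<in> borel_measurable lborel"
      using H1_onD(2)[OF H1] H1_onD(2)[OF H2] by measurable
    have "(\<lambda>x. if x \<le> q then (g x)\<^sup>2 else (h x)\<^sup>2) absolutely_integrable_on {p..r}"
      by (rule absolutely_integrable_if_le[OF H1_onD(4)[OF H1] H1_onD(4)[OF H2] pq qr])
    then show "(\<lambda>x. (?k x)\<^sup>2) absolutely_integrable_on {p..r}"
      by (simp add: if_distrib[of "\<lambda>y. y\<^sup>2"])
    fix x assume x: "x \<in> {p..r}"
    show "(if x \<le> q then u x else v x) = (if p \<le> q then u p else v p) + integral {p..x} ?k"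
    proof (cases "x \<le> q")
      case True
      have "integral {p..x} ?k = integral {p..x} g"
        by (rule integral_cong) (use True in auto)
      then show ?thesis using True pq x H1_onD(5)[OF H1, of x] by simp
    next
      case False
      then show ?thesis
        using pq x assms(3) integral_k[of x] H1_onD(5)[OF H2, of x] H1_onD(5)[OF H1, of q] by simp
    qed
  qed (use pq qr k_int in simp_all)
qed

lemma H1_on_affine:
  assumes "p \<le> q"
  shows "H1_on p q (\<lambda>x. y + k * (x - p)) (\<lambda>x. k)"
  by (rule H1_onI) (use assms in \<open>auto simp: absolutely_integrable_continuous_real algebra_simps\<close>)

lemma H1_on_const:
  assumes "p \<le> q"
  shows "H1_on p q (\<lambda>x. c) (\<lambda>x. 0)"
  by (rule H1_onI) (use assms in auto)

lemma in_U_iff_H1_on: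
  assumes "0 \<le> T"
  shows "in_U T u g \<longleftrightarrow> H1_on 0 T u g \<and> u 0 = 1 \<and> u T = 1"
proof -
  have integrable_iff: "set_integrable lborel {0..T} f \<longleftrightarrow> f absolutely_integrable_on {0..T}"
    if "f \<in> borel_measurable lborel" for f :: "real \<Rightarrow> real"
    by (rule set_integrable_lborel_iff_absolutely_integrable) (use that in measurable)
  have interval_integral: "(LBINT t=0..x. g t) = integral {0..x} g"
    if "set_integrable lborel {0..T} g" "x \<in> {0..T}" for x
  proof -
    have "set_integrable lborel {0..x} g"
      by (rule set_integrable_subset[OF that(1)]) (use that in auto)
    then show ?thesis
      using interval_integral_eq_integral[of 0 x g] that by (simp add: zero_ereal_def)
  qed
  show ?thesis
  proof (cases "g \<in> borel_measurable lborel")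
    case True
    then have "(\<lambda>x. (g x)\<^sup>2) \<in> borel_measurable lborel" by measurable
    with True show ?thesis
      unfolding in_U_def H1_with_deriv_def H1_on_def
      using assms integrable_iff interval_integral by auto
  qed (simp add: in_U_def H1_with_deriv_def H1_on_def)
qed

section \<open>The energy and its competitors\<close>

locale energy_functional =
  fixes a b :: "real \<Rightarrow> real"
  assumes continuous_a: "continuous_on UNIV a" and continuous_b: "continuous_on UNIV b"
    and a_nonneg: "\<And>s. 0 \<le> a s"
begin

definition energy :: "real \<Rightarrow> real \<Rightarrow> (real \<Rightarrow> real) \<Rightarrow> (real \<Rightarrow> real) \<Rightarrow> real" where
  "energy p q u g = integral {p..q} (\<lambda>x. a (u x) * (g x)\<^sup>2 + b (u x))"

lemma continuous_on_compose_H1: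
  assumes "H1_on p q u g"
  shows "continuous_on {p..q} (\<lambda>x. a (u x))" "continuous_on {p..q} (\<lambda>x. b (u x))"
  using continuous_on_compose2[OF continuous_a H1_on_continuous[OF assms]]
    continuous_on_compose2[OF continuous_b H1_on_continuous[OF assms]] by auto

lemma energy_density_absolutely_integrable:
  assumes H: "H1_on p q u g"
  shows "(\<lambda>x. a (u x) * (g x)\<^sup>2 + b (u x)) absolutely_integrable_on {p..q}"
proof -
  have "(\<lambda>x. a (u x) * (g x)\<^sup>2) absolutely_integrable_on {p..q}"
  proof (rule absolutely_integrable_bounded_measurable_product_real)
    show "(\<lambda>x. a (u x)) \<in> borel_measurable (lebesgue_on {p..q})"
      by (rule continuous_imp_measurable_on_sets_lebesgue[OF continuous_on_compose_H1(1)[OF H]]) auto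
    show "bounded ((\<lambda>x. a (u x)) ` {p..q})"
      by (intro compact_imp_bounded compact_continuous_image continuous_on_compose_H1[OF H]) auto
  qed (use H1_onD(4)[OF H] in auto)
  moreover have "(\<lambda>x. b (u x)) absolutely_integrable_on {p..q}"
    by (rule absolutely_integrable_continuous_real[OF continuous_on_compose_H1(2)[OF H]])
  ultimately show ?thesis by (rule set_integral_add(1))
qed

lemma energy_density_integrable:
  "H1_on p q u g \<Longrightarrow> (\<lambda>x. a (u x) * (g x)\<^sup>2 + b (u x)) integrable_on {p..q}"
  by (rule set_lebesgue_integral_eq_integral(1)[OF energy_density_absolutely_integrable])

lemma F_energy_eq_energy:
  assumes H: "H1_on 0 T u g"
  shows "F_energy a b T u g = energy 0 T u g"
proof -
  have "(\<lambda>x. indicator {0..T} x *\<^sub>R a (u x)) \<in> borel_measurable borel"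
    "(\<lambda>x. indicator {0..T} x *\<^sub>R b (u x)) \<in> borel_measurable borel"
    by (intro borel_measurable_continuous_on_indicator continuous_on_compose_H1[OF H]; simp)+
  moreover have "g \<in> borel_measurable borel" using H1_onD(2)[OF H] by simp
  ultimately have "(\<lambda>x. (indicator {0..T} x *\<^sub>R a (u x)) * (g x)\<^sup>2 + indicator {0..T} x *\<^sub>R b (u x))
      \<in> borel_measurable lborel"
    by measurable
  moreover have "(\<lambda>x. (indicator {0..T} x *\<^sub>R a (u x)) * (g x)\<^sup>2 + indicator {0..T} x *\<^sub>R b (u x))
      = (\<lambda>x. indicator {0..T} x *\<^sub>R (a (u x) * (g x)\<^sup>2 + b (u x)))"
    by (auto simp: indicator_def fun_eq_iff)
  ultimately have "set_integrable lborel {0..T} (\<lambda>x. a (u x) * (g x)\<^sup>2 + b (u x))"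
    using set_integrable_lborel_iff_absolutely_integrable energy_density_absolutely_integrable[OF H]
    by metis
  then show ?thesis unfolding F_energy_def energy_def
    by (rule set_borel_integral_eq_integral(2))
qed

lemma energy_split:
  assumes "H1_on p r u g" "p \<le> q" "q \<le> r"
  shows "energy p r u g = energy p q u g + energy q r u g"
  unfolding energy_def
  by (rule Henstock_Kurzweil_Integration.integral_combine[rotated 2, symmetric])
    (use assms energy_density_integrable in auto)

lemma energy_shift: "energy (p + d) (q + d) (\<lambda>x. u (x - d)) (\<lambda>x. g (x - d)) = energy p q u g"
  unfolding energy_def
  using integral_shift_real_ivl[of p "-d" q "\<lambda>x. a (u x) * (g x)\<^sup>2 + b (u x)"] by simp

lemma energy_concat:
  assumes H1: "H1_on p q u g" and H2: "H1_on q r v h" and "u q = v q"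
  shows "energy p r (\<lambda>x. if x \<le> q then u x else v x) (\<lambda>x. if x \<le> q then g x else h x)
     = energy p q u g + energy q r v h"
proof -
  let ?w = "\<lambda>x. if x \<le> q then u x else v x" and ?k = "\<lambda>x. if x \<le> q then g x else h x"
  have "energy p r ?w ?k = energy p q ?w ?k + energy q r ?w ?k"
    by (rule energy_split[OF H1_on_concat[OF assms]]) (use H1_onD(1)[OF H1] H1_onD(1)[OF H2] in auto)
  moreover have "energy p q ?w ?k = energy p q u g"
    unfolding energy_def by (rule integral_cong) auto
  moreover have "energy q r ?w ?k = energy q r v h"
    unfolding energy_def by (rule integral_spike[of "{q}"]) auto
  ultimately show ?thesis by simp
qed

lemma integral_b_le_energy:
  assumes H: "H1_on p q u g"
  shows "integral {p..q} (\<lambda>x. b (u x)) \<le> energy p q u g"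
  unfolding energy_def
  by (rule integral_le[OF integrable_continuous_real[OF continuous_on_compose_H1(2)[OF H]]
        energy_density_integrable[OF H]])
    (simp add: a_nonneg)

definition joins :: "real \<Rightarrow> real \<Rightarrow> real \<Rightarrow> real \<Rightarrow> real \<Rightarrow> bool" where
  "joins p q y0 y1 E \<longleftrightarrow> (\<exists>w h. H1_on p q w h \<and> w p = y0 \<and> w q = y1 \<and> energy p q w h = E)"

lemma joins_concat:
  assumes "joins p q y0 y1 E1" "joins q r y1 y2 E2"
  shows "joins p r y0 y2 (E1 + E2)"
proof -
  obtain u g v h where uv: "H1_on p q u g" "u p = y0" "u q = y1" "energy p q u g = E1"
    "H1_on q r v h" "v q = y1" "v r = y2" "energy q r v h = E2"
    using assms unfolding joins_def by blast
  then have "p \<le> q" "q \<le> r" using H1_onD(1) by blast+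
  with uv show ?thesis
    unfolding joins_def
    by (intro exI[of _ "\<lambda>x. if x \<le> q then u x else v x"] exI[of _ "\<lambda>x. if x \<le> q then g x else h x"])
      (auto simp: H1_on_concat energy_concat)
qed

lemma joins_const:
  assumes "q - p = l" "0 \<le> l"
  shows "joins p q y y (b y * l)"
  unfolding joins_def energy_def
  by (intro exI[of _ "\<lambda>x. y"] exI[of _ "\<lambda>x. 0"]) (use assms in \<open>auto simp: H1_on_const\<close>)

lemma joins_translate:
  assumes H: "H1_on s t u g" and "t' - s' = t - s"
  shows "joins s' t' (u s) (u t) (energy s t u g)"
proof -
  define d where "d = s' - s"
  have "s' = s + d" "t' = t + d" using assms(2) by (auto simp: d_def)
  then show ?thesis
    unfolding joins_def
    by (intro exI[of _ "\<lambda>x. u (x - d)"] exI[of _ "\<lambda>x. g (x - d)"]) (simp add: H1_on_shift[OF H] energy_shift)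
qed

definition ramp_cost :: "real \<Rightarrow> real \<Rightarrow> real" where
  "ramp_cost y0 y1 = energy 0 1 (\<lambda>x. y0 + (y1 - y0) * x) (\<lambda>x. y1 - y0)"

lemma joins_ramp:
  assumes "q = p + 1"
  shows "joins p q y0 y1 (ramp_cost y0 y1)"
proof -
  have "joins p q ((\<lambda>x. y0 + (y1 - y0) * x) 0) ((\<lambda>x. y0 + (y1 - y0) * x) 1) (ramp_cost y0 y1)"
    unfolding ramp_cost_def using H1_on_affine[of 0 1 y0 "y1 - y0"] assms
    by (intro joins_translate) simp_all
  then show ?thesis by simp
qed

end

locale energy_minimizer = energy_functional +
  fixes T :: real and U g :: "real \<Rightarrow> real"
  assumes admissible: "H1_on 0 T U g" "U 0 = 1" "U T = 1"
    and minimal: "\<And>w h. H1_on 0 T w h \<Longrightarrow> w 0 = 1 \<Longrightarrow> w T = 1 \<Longrightarrow> energy 0 T U g \<le> energy 0 T w h"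
begin

lemma energy_le_joins: "joins 0 T 1 1 E \<Longrightarrow> energy 0 T U g \<le> E"
  unfolding joins_def using minimal by blast

lemma energy_le_ramp_const_ramp:
  assumes "2 \<le> T"
  shows "energy 0 T U g \<le> ramp_cost 1 s + b s * (T - 2) + ramp_cost s 1"
proof -
  have "joins 0 1 1 s (ramp_cost 1 s)" "joins 1 (T - 1) s s (b s * (T - 2))"
    "joins (T - 1) T s 1 (ramp_cost s 1)"
    using assms by (auto intro: joins_ramp joins_const)
  then have "joins 0 T 1 1 (ramp_cost 1 s + (b s * (T - 2) + ramp_cost s 1))"
    by (blast intro: joins_concat)
  then show ?thesis by (simp add: energy_le_joins add.assoc)
qed

end

lemma (in energy_functional) is_minimizer_imp_energy_minimizer:
  assumes "0 \<le> T" "is_minimizer a b T u"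
  obtains g where "energy_minimizer a b T u g"
proof -
  obtain g where g: "in_U T u g"
    and min: "\<And>v h. in_U T v h \<Longrightarrow> F_energy a b T u g \<le> F_energy a b T v h"
    using assms(2) unfolding is_minimizer_def by blast
  have H: "H1_on 0 T u g" "u 0 = 1" "u T = 1" using g in_U_iff_H1_on[OF assms(1)] by auto
  have "energy_minimizer a b T u g"
  proof (rule energy_minimizer.intro[OF energy_functional_axioms], unfold_locales)
    fix w h assume w: "H1_on 0 T w h" "w 0 = 1" "w T = 1"
    then have "F_energy a b T u g \<le> F_energy a b T w h"
      using min in_U_iff_H1_on[OF assms(1)] by blast
    then show "energy 0 T u g \<le> energy 0 T w h"
      using F_energy_eq_energy H(1) w(1) by simp
  qed (use H in auto)
  then show thesis by (rule that)
qed

section \<open>Superlevel sets of minimizers\<close>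

context energy_minimizer
begin

lemma energy_outside_excursion_le:
  assumes "0 \<le> p" "p \<le> x0" "x0 \<le> q" "q \<le> T" "U p = c" "U q = c" "q - p \<le> T - 2"
  shows "energy 0 p U g + energy q T U g \<le> ramp_cost 1 c + ramp_cost c 1 + b (U x0) * (T - 2 - (q - p))"
proof -
  have sub: "H1_on p x0 U g" "H1_on x0 q U g"
    using assms by (auto intro: H1_on_subinterval[OF admissible(1)])
  have "joins 1 (x0 - p + 1) c (U x0) (energy p x0 U g)"
    "joins (T - 1 - (q - x0)) (T - 1) (U x0) c (energy x0 q U g)"
    using joins_translate[OF sub(1), where s'=1 and t'="x0 - p + 1"]
      joins_translate[OF sub(2), where s'="T - 1 - (q - x0)" and t'="T - 1"] assms by simp_all
  moreover have "joins 0 1 1 c (ramp_cost 1 c)" "joins (T - 1) T c 1 (ramp_cost c 1)"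
    "joins (x0 - p + 1) (T - 1 - (q - x0)) (U x0) (U x0) (b (U x0) * (T - 2 - (q - p)))"
    using assms by (auto intro: joins_ramp joins_const)
  ultimately have "joins 0 T 1 1 (ramp_cost 1 c + (energy p x0 U g +
      (b (U x0) * (T - 2 - (q - p)) + (energy x0 q U g + ramp_cost c 1))))"
    by (blast intro: joins_concat)
  then have "energy 0 T U g \<le> ramp_cost 1 c + energy p x0 U g +
      b (U x0) * (T - 2 - (q - p)) + energy x0 q U g + ramp_cost c 1"
    by (simp add: energy_le_joins add.assoc)
  moreover have "energy 0 T U g = energy 0 p U g + energy p T U g"
    by (rule energy_split[OF admissible(1)]) (use assms in auto)
  moreover have "energy p T U g = energy p x0 U g + energy x0 T U g"
    "energy x0 T U g = energy x0 q U g + energy q T U g"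
    by (rule energy_split[OF H1_on_subinterval[OF admissible(1)]]; use assms in auto)+
  ultimately show ?thesis by simp
qed

lemma energy_ge_measure_superlevel_set:
  assumes "0 \<le> l" "l \<le> r" "r \<le> T"
    and lower: "\<And>x. x \<in> {0..T} \<Longrightarrow> \<beta> \<le> b (U x)" and gap: "\<And>y. c \<le> y \<Longrightarrow> \<beta> + k \<le> b y"
  shows "\<beta> * (r - l) + k * measure lebesgue ({x\<in>{0..T}. c \<le> U x} \<inter> {l..r}) \<le> energy l r U g"
proof -
  define S where "S = {x\<in>{0..T}. c \<le> U x}"
  have H: "H1_on l r U g" by (rule H1_on_subinterval[OF admissible(1)]) (use assms in auto)
  have "compact S"
    unfolding S_def by (rule compact_superlevel_set[OF H1_on_continuous[OF admissible(1)]])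
  then have "S \<inter> {l..r} \<in> lmeasurable" by (intro lmeasurable_compact compact_Int_closed) auto
  moreover have "\<beta> + k * indicator S x \<le> b (U x)" if "x \<in> {l..r}" for x
    using lower[of x] gap[of "U x"] that assms(1,3) by (auto simp: S_def indicator_def)
  ultimately have "\<beta> * (r - l) + k * measure lebesgue (S \<inter> {l..r}) \<le> integral {l..r} (\<lambda>x. b (U x))"
    by (intro integral_ge_const_plus_indicator)
      (use assms in \<open>auto intro: integrable_continuous_real continuous_on_compose_H1[OF H]\<close>)
  also have "\<dots> \<le> energy l r U g" by (rule integral_b_le_energy[OF H])
  finally show ?thesis unfolding S_def .
qed

lemma superlevel_measure_le:
  assumes "c \<le> 1" "x0 \<in> {0..T}" "U x0 < c"
    and min_x0: "\<And>x. x \<in> {0..T} \<Longrightarrow> b (U x0) \<le> b (U x)"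
    and "0 < k" and gap: "\<And>y. c \<le> y \<Longrightarrow> b (U x0) + k \<le> b y"
  shows "measure lebesgue {x\<in>{0..T}. c \<le> U x}
    \<le> max 2 ((ramp_cost 1 c + ramp_cost c 1 - 2 * b (U x0)) / k)"
proof -
  define S where "S = {x\<in>{0..T}. c \<le> U x}"
  have cont: "continuous_on {0..T} U" by (rule H1_on_continuous[OF admissible(1)])
  obtain p where p: "0 \<le> p" "p < x0" "U p = c" and below_p: "\<And>x. p < x \<Longrightarrow> x \<le> x0 \<Longrightarrow> U x < c"
    by (rule last_level_point[of 0 x0 U c]) (use assms admissible(2) cont in \<open>auto intro: continuous_on_subset\<close>)
  obtain q where q: "x0 < q" "q \<le> T" "U q = c" and below_q: "\<And>x. x0 \<le> x \<Longrightarrow> x < q \<Longrightarrow> U x < c"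
    by (rule first_level_point[of x0 T U c]) (use assms admissible(3) cont in \<open>auto intro: continuous_on_subset\<close>)
  have "U x < c" if "p < x" "x < q" for x
    using below_p[of x] below_q[of x] that by linarith
  then have measure_S: "measure lebesgue S \<le> measure lebesgue (S \<inter> {0..p}) + measure lebesgue (S \<inter> {q..T})"
    unfolding S_def by (rule measure_superlevel_set_le_outside[OF cont])
  show ?thesis
  proof (cases "q - p \<le> T - 2")
    case False
    have "S \<in> sets lebesgue"
      unfolding S_def by (intro fmeasurableD lmeasurable_compact compact_superlevel_set[OF cont])
    then have "measure lebesgue S \<le> 2"
      using measure_S False p q measure_Int_atLeastAtMost_le[of S 0 p]
        measure_Int_atLeastAtMost_le[of S q T] by linarith
    then show ?thesis unfolding S_def by simp
  next
    case True
    have "b (U x0) * (p - 0) + k * measure lebesgue (S \<inter> {0..p}) \<le> energy 0 p U g"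
      "b (U x0) * (T - q) + k * measure lebesgue (S \<inter> {q..T}) \<le> energy q T U g"
      unfolding S_def by (rule energy_ge_measure_superlevel_set; use p q min_x0 gap in force)+
    moreover have "energy 0 p U g + energy q T U g
        \<le> ramp_cost 1 c + ramp_cost c 1 + b (U x0) * (T - 2 - (q - p))"
      by (rule energy_outside_excursion_le) (use p q True in auto)
    moreover have "b (U x0) * (T - 2 - (q - p)) = b (U x0) * (p - 0) + b (U x0) * (T - q) - 2 * b (U x0)"
      by (simp add: algebra_simps)
    ultimately have "k * measure lebesgue (S \<inter> {0..p}) + k * measure lebesgue (S \<inter> {q..T})
        \<le> ramp_cost 1 c + ramp_cost c 1 - 2 * b (U x0)"
      by linarith
    moreover have "k * measure lebesgue S \<le> k * measure lebesgue (S \<inter> {0..p}) + k * measure lebesgue (S \<inter> {q..T})"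
      using measure_S \<open>0 < k\<close> by (simp add: distrib_left[symmetric])
    ultimately have "k * measure lebesgue S \<le> ramp_cost 1 c + ramp_cost c 1 - 2 * b (U x0)"
      by linarith
    with \<open>0 < k\<close> have "measure lebesgue S \<le> (ramp_cost 1 c + ramp_cost c 1 - 2 * b (U x0)) / k"
      by (simp add: le_divide_eq mult.commute)
    then show ?thesis unfolding S_def by (simp add: max.coboundedI2)
  qed
qed

lemma lower_bound_along_minimizer_le:
  assumes "2 \<le> T" "\<And>x. x \<in> {0..T} \<Longrightarrow> \<beta> \<le> b (U x)"
  shows "(\<beta> - b s) * T \<le> ramp_cost 1 s + ramp_cost s 1 - 2 * b s"
proof -
  have "\<beta> * T \<le> integral {0..T} (\<lambda>x. b (U x))"
    using integral_le[OF integrable_const_ivl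
        integrable_continuous_real[OF continuous_on_compose_H1(2)[OF admissible(1)]], of \<beta>] assms
    by (simp add: mult.commute)
  also have "\<dots> \<le> energy 0 T U g" by (rule integral_b_le_energy[OF admissible(1)])
  also have "\<dots> \<le> ramp_cost 1 s + b s * (T - 2) + ramp_cost s 1"
    by (rule energy_le_ramp_const_ramp[OF assms(1)])
  finally show ?thesis by (simp add: algebra_simps)
qed

lemma superlevel_measure_bounded:
  assumes "c \<le> 1" "0 < \<delta>" and m_le: "\<And>y. m \<le> b y" and gap: "\<And>y. c \<le> y \<Longrightarrow> m + \<delta> \<le> b y"
    and s: "b s < m + \<delta> / 4"
  shows "measure lebesgue {x\<in>{0..T}. c \<le> U x}
    \<le> max (2 + 4 * \<bar>ramp_cost 1 s + ramp_cost s 1 - 2 * b s\<bar> / \<delta>)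
        (max 2 (2 * (ramp_cost 1 c + ramp_cost c 1 - 2 * m) / \<delta>))"
    (is "_ \<le> max (2 + 4 * \<bar>?K\<bar> / \<delta>) ?C")
proof (cases "T \<le> 2 + 4 * \<bar>?K\<bar> / \<delta>")
  case True
  have "measure lebesgue {x\<in>{0..T}. c \<le> U x} \<le> measure lebesgue {0..T}"
    using compact_superlevel_set[OF H1_on_continuous[OF admissible(1)]]
    by (intro measure_mono_fmeasurable) (auto intro: fmeasurableD[OF lmeasurable_compact])
  then show ?thesis using True H1_onD(1)[OF admissible(1)] by simp
next
  case False
  define K where "K = ?K"
  from False have "4 * \<bar>K\<bar> / \<delta> < T - 2" unfolding K_def by linarith
  moreover have "0 \<le> 4 * \<bar>K\<bar> / \<delta>" using \<open>0 < \<delta>\<close> by simp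
  ultimately have "2 \<le> T" "4 * \<bar>K\<bar> < (T - 2) * \<delta>"
    using \<open>0 < \<delta>\<close> by (linarith, simp add: divide_less_eq)
  moreover have "(T - 2) * \<delta> \<le> T * \<delta>" using \<open>0 < \<delta>\<close> by (intro mult_right_mono) auto
  ultimately have K_small: "4 * \<bar>K\<bar> < \<delta> * T" by (simp add: mult.commute)
  obtain x0 where x0: "x0 \<in> {0..T}" and min_x0: "\<And>x. x \<in> {0..T} \<Longrightarrow> b (U x0) \<le> b (U x)"
    using continuous_attains_inf[OF compact_Icc _ continuous_on_compose_H1(2)[OF admissible(1)]]
      \<open>2 \<le> T\<close> by auto
  have "(b (U x0) - b s) * T \<le> K"
    unfolding K_def by (rule lower_bound_along_minimizer_le[OF \<open>2 \<le> T\<close> min_x0])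
  with K_small abs_ge_self[of K] have "(4 * (b (U x0) - b s)) * T < \<delta> * T" by linarith
  then have "4 * (b (U x0) - b s) < \<delta>" using \<open>2 \<le> T\<close> by (simp add: mult_less_cancel_right)
  with s have min_small: "b (U x0) < m + \<delta> / 2" by simp
  then have "U x0 < c" using gap[of "U x0"] \<open>0 < \<delta>\<close> by (cases "c \<le> U x0") auto
  have gap': "b (U x0) + \<delta> / 2 \<le> b y" if "c \<le> y" for y
    using min_small gap[OF that] by simp
  have "measure lebesgue {x\<in>{0..T}. c \<le> U x}
      \<le> max 2 ((ramp_cost 1 c + ramp_cost c 1 - 2 * b (U x0)) / (\<delta> / 2))"
    by (rule superlevel_measure_le[OF assms(1) x0 \<open>U x0 < c\<close> min_x0 half_gt_zero[OF assms(2)] gap'])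
  also have "\<dots> \<le> max 2 (2 * (ramp_cost 1 c + ramp_cost c 1 - 2 * m) / \<delta>)"
    using m_le[of "U x0"] \<open>0 < \<delta>\<close> by (intro max.mono) (simp_all add: divide_right_mono)
  finally show ?thesis by simp
qed

end

theorem mainTheorem2:
  fixes a b :: "real \<Rightarrow> real" and ubar :: real and u :: "real \<Rightarrow> real \<Rightarrow> real"
  assumes "a C1_differentiable_on UNIV" and "b C1_differentiable_on UNIV"
    and "\<And>s. a s > 0"
    and "ubar < 1"
    and "bdd_below (range b)"
    and "Inf (range b) < Inf (b ` {ubar..})"
    and "\<And>T. T > 0 \<Longrightarrow> is_minimizer a b T (u T)"
  shows "\<exists>c>0. \<forall>T>0. measure lebesgue {x\<in>{0..T}. u T x \<ge> ubar} \<le> c * (1 + sqrt T)"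
proof -
  interpret energy_functional a b
    using assms(1-3) by unfold_locales (auto intro: C1_differentiable_imp_continuous_on less_imp_le)
  define m where "m = Inf (range b)"
  define \<delta> where "\<delta> = Inf (b ` {ubar..}) - m"
  have "0 < \<delta>" using assms(6) by (simp add: \<delta>_def m_def)
  have m_le: "m \<le> b y" for y
    unfolding m_def by (rule cInf_lower) (use assms(5) in auto)
  have gap: "m + \<delta> \<le> b y" if "ubar \<le> y" for y
    unfolding \<delta>_def
    by (simp, rule cInf_lower) (use that bdd_below_mono[OF assms(5) image_mono[OF subset_UNIV]] in auto)
  obtain s where s: "b s < m + \<delta> / 4"
    using cInf_lessD[of "range b" "m + \<delta> / 4"] \<open>0 < \<delta>\<close> by (auto simp: m_def)
  define c where "c = max (2 + 4 * \<bar>ramp_cost 1 s + ramp_cost s 1 - 2 * b s\<bar> / \<delta>)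
      (max 2 (2 * (ramp_cost 1 ubar + ramp_cost ubar 1 - 2 * m) / \<delta>))"
  have bound: "measure lebesgue {x\<in>{0..T}. u T x \<ge> ubar} \<le> c" if T: "T > 0" for T
  proof -
    obtain g where "energy_minimizer a b T (u T) g"
      using is_minimizer_imp_energy_minimizer[OF less_imp_le[OF T] assms(7)[OF T]] .
    then show ?thesis unfolding c_def
      by (rule energy_minimizer.superlevel_measure_bounded)
        (use assms(4) \<open>0 < \<delta>\<close> m_le gap s in auto)
  qed
  have "0 < c" by (simp add: c_def)
  moreover have "c \<le> c * (1 + sqrt T)" if "T > 0" for T
    using \<open>0 < c\<close> that by simp
  ultimately show ?thesis using bound by (meson order_trans)
qed

end
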